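(* For the policy $\tt E^3$-$\tt TS$ with $\gamma_\beta=\lceil 8/\Delta_{\min}^2\rceil$, for every epoch $l\ge1$ and every arm $j>1$, $$\mathbb P\big(\theta_1(l)<\theta_j(l)\big)\le 4e^{-l}.$$
   Context: Single-player $N$-armed bandit: the rewards of arm $k$ are i.i.d. over time with support in $[0,1]$ and unknown mean $\mu_k$, independent across arms; arm 1 has the greatest mean and $\Delta_{\min}=\mu_1-\max_{j\ne1}\mu_j>0$. Policy $\tt E^3$-$\tt TS$ proceeds in epochs $l=1,2,\dots$; in the exploration phase of each epoch every arm is played $\gamma_\beta$ times. Counters $S_i,F_i$ start at $0$; for each exploration play of arm $i$ with reward $\tilde r$, an independent Bernoulli trial with success probability $\tilde r$ is performed, incrementing $S_i$ on success and $F_i$ otherwise. At the end of the exploration phase of epoch $l$, $\theta_i(l)$ is sampled (independently) from $\mathrm{Beta}(S_i+1,F_i+1)$ for each arm $i$, using the current counters (which are based on $\gamma_\beta l$ plays of arm $i$). (In the exploitation phase the arm $\arg\max_i\theta_i(l)$ is played for $2^l$ slots.) *)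

theory Defs
  imports "HOL-Probability.Probability"
begin

definition beta_density :: "real \<Rightarrow> real \<Rightarrow> real \<Rightarrow> real" where
  "beta_density a b x =
     (if 0 < x \<and> x < 1 then x powr (a - 1) * (1 - x) powr (b - 1) / Beta a b else 0)"

definition beta_measure :: "real \<Rightarrow> real \<Rightarrow> real measure" where
  "beta_measure a b = density lborel (\<lambda>x. ennreal (beta_density a b x))"

text \<open>One exploration play of an arm with reward distribution D: draw a reward r,
  then perform a Bernoulli trial with success probability r.\<close>
definition trial :: "real measure \<Rightarrow> bool measure" where
  "trial D = D \<bind> (\<lambda>r. measure_pmf (bernoulli_pmf r))"

definition success_count :: "real measure \<Rightarrow> nat \<Rightarrow> nat measure" where
  "success_count D n =
     distr (PiM {..<n} (\<lambda>_. trial D)) (count_space UNIV) (\<lambda>\<omega>. card {t \<in> {..<n}. \<omega> t})"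

definition ts_sample :: "real measure \<Rightarrow> nat \<Rightarrow> real measure" where
  "ts_sample D n = success_count D n \<bind> (\<lambda>s. beta_measure (real s + 1) (real (n - s) + 1))"

text \<open>Joint law of the samples theta_i(l), i = 1..N, at the end of the exploration phase of
  epoch l (each arm played gamma*l times, arms independent).\<close>
definition e3ts_thetas :: "nat \<Rightarrow> (nat \<Rightarrow> real measure) \<Rightarrow> nat \<Rightarrow> nat \<Rightarrow> (nat \<Rightarrow> real) measure" where
  "e3ts_thetas N D \<gamma> l = PiM {1..N} (\<lambda>i. ts_sample (D i) (\<gamma> * l))"

end

theory Submission
  imports Defs
begin

text \<open>The \<open>n = \<gamma> l\<close> exploration plays of an arm with mean \<open>p\<close> yield a success count
  \<open>S ~ Bin(n, p)\<close>, and \<open>\<theta> ~ Beta(S+1, n-S+1)\<close>.  By the Beta--binomial identity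
  \<open>P(\<theta> \<le> y | S) = P(Bin(n+1, y) > S)\<close>, a Hoeffding bound for \<open>S\<close> together with one for
  the auxiliary binomial shows that \<open>\<theta>\<close> deviates from \<open>p\<close> by more than \<open>\<Delta>/2\<close> with
  probability at most \<open>2 exp(-n \<Delta>\<^sup>2/8) \<le> 2 exp(-l)\<close>.  Splitting \<open>\<theta>\<^sub>1 < \<theta>\<^sub>j\<close> at the
  midpoint \<open>\<mu>\<^sub>1 - \<Delta>/2\<close> gives the bound \<open>4 exp(-l)\<close>.\<close>

definition binomial_tail :: "nat \<Rightarrow> nat \<Rightarrow> real \<Rightarrow> real" where
  "binomial_tail s m y = (\<Sum>k=s+1..s+1+m. real ((s+1+m) choose k) * y^k * (1-y)^(s+1+m-k))"

text \<open>Differentiating the sum, consecutive terms cancel and only the density of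
  \<open>Beta(s+1, m+1)\<close> survives.\<close>
lemma has_real_derivative_binomial_tail:
  "(binomial_tail s m has_real_derivative
     real (s+1+m) * real ((s+m) choose s) * y^s * (1-y)^m) (at y)"
proof (induction m arbitrary: s)
  case 0
  have "binomial_tail s 0 = (\<lambda>y. y ^ Suc s)"
    unfolding binomial_tail_def by simp
  then show ?case
    using DERIV_pow[of "Suc s" y] by simp
next
  case (Suc m)
  let ?c = "real ((s+2+m) choose (s+1))"
  have split: "binomial_tail s (Suc m) = (\<lambda>y. ?c * (y^(s+1) * (1-y)^(Suc m)) + binomial_tail (s+1) m y)"
  proof
    fix y :: real
    have "{s+1..s+1+Suc m} = insert (s+1) {s+2..s+2+m}" by auto
    then show "binomial_tail s (Suc m) y = ?c * (y^(s+1) * (1-y)^(Suc m)) + binomial_tail (s+1) m y"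
      unfolding binomial_tail_def by (auto simp: Suc_diff_le add_ac)
  qed
  have "((\<lambda>y. 1 - y) has_real_derivative -1) (at y)"
    by (auto intro!: derivative_eq_intros)
  from DERIV_chain'[OF this DERIV_pow[of "Suc m" "1 - y"]]
  have "((\<lambda>y. (1 - y) ^ Suc m) has_real_derivative - (real (Suc m) * (1 - y) ^ m)) (at y)"
    by simp
  from DERIV_cmult[OF DERIV_mult[OF DERIV_pow[of "s+1" y] this], of ?c]
  have head: "((\<lambda>y. ?c * (y^(s+1) * (1-y)^(Suc m))) has_real_derivative
      ?c * real (s+1) * y^s * (1-y)^(Suc m) - ?c * real (Suc m) * y^(s+1) * (1-y)^m) (at y)"
    by (simp add: algebra_simps)
  have "(s+2+m choose (s+1)) * (s+1) = (s+2+m) * (s+1+m choose s)"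
    using Suc_times_binomial_eq[of "s+1+m" s] by (simp add: mult.commute)
  then have c1: "?c * real (s+1) = real (s+2+m) * real ((s+1+m) choose s)"
    by (metis of_nat_mult)
  have "(s+2+m choose (s+1)) * Suc m = (s+2+m) * (s+1+m choose (s+1))"
    using binomial_absorb_comp[of "s+2+m" "s+1"] by (simp add: mult.commute)
  then have c2: "?c * real (Suc m) = real (s+2+m) * real ((s+1+m) choose (s+1))"
    by (metis of_nat_mult)
  show ?case
    using DERIV_add[OF head Suc.IH[of "s+1"]]
    unfolding split c1 c2 by (simp add: add_ac algebra_simps)
qed

lemma binomial_tail_1: "binomial_tail s m 1 = 1"
proof -
  have "binomial_tail s m 1 = (\<Sum>k=s+1..s+1+m. if k = s+1+m then 1 else 0)"
    unfolding binomial_tail_def by (intro sum.cong) auto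
  then show ?thesis by simp
qed

lemma binomial_tail_eq_prob:
  assumes "0 \<le> y" "y \<le> 1"
  shows "binomial_tail s m y = measure_pmf.prob (binomial_pmf (s+1+m) y) {k. s < k}"
proof -
  let ?p = "binomial_pmf (s+1+m) y"
  have "set_pmf ?p \<subseteq> {..s+1+m}"
    using assms by (auto simp: set_pmf_binomial_eq split: if_splits)
  then have "{k. s < k} \<inter> set_pmf ?p = {s+1..s+1+m} \<inter> set_pmf ?p"
    by auto
  then have "measure_pmf.prob ?p {k. s < k} = measure_pmf.prob ?p {s+1..s+1+m}"
    by (metis measure_Int_set_pmf)
  also have "\<dots> = binomial_tail s m y"
    using assms by (simp add: measure_measure_pmf_finite binomial_tail_def)
  finally show ?thesis ..
qed

lemma Beta_of_nat: "Beta (real s + 1) (real m + 1) = fact s * fact m / fact (s + m + 1)"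
proof -
  have "Gamma (real k + 1) = fact k" for k
    using Gamma_fact[of k, where 'a=real] by (simp add: add.commute)
  from this[of s] this[of m] this[of "s+m+1"] show ?thesis
    unfolding Beta_def by (simp add: add_ac)
qed

lemma beta_density_of_nat:
  assumes "0 < x" "x < 1"
  shows "beta_density (real s + 1) (real m + 1) x
           = real (s+1+m) * real ((s+m) choose s) * x^s * (1-x)^m"
proof -
  have choose: "real ((s+m) choose s) = fact (s+m) / (fact s * fact m)"
    using binomial_fact[of s "s+m", where 'a=real] by simp
  have "beta_density (real s + 1) (real m + 1) x = x^s * (1-x)^m / (fact s * fact m / fact (s+m+1))"
    using assms unfolding beta_density_def Beta_of_nat by (simp add: powr_realpow)
  also have "\<dots> = x^s * (1-x)^m * (real (s+1+m) * (fact (s+m) / (fact s * fact m)))"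
    by (simp add: field_simps)
  finally show ?thesis
    unfolding choose by simp
qed

lemma borel_measurable_beta_density [measurable]: "beta_density a b \<in> borel_measurable borel"
  unfolding beta_density_def by measurable

lemma sets_beta_measure [simp, measurable_cong]: "sets (beta_measure a b) = sets borel"
  by (simp add: beta_measure_def)

lemma space_beta_measure [simp]: "space (beta_measure a b) = UNIV"
  by (simp add: beta_measure_def)

lemma emeasure_beta_measure:
  "A \<in> sets borel \<Longrightarrow>
     emeasure (beta_measure a b) A = (\<integral>\<^sup>+x. ennreal (beta_density a b x) * indicator A x \<partial>lborel)"
  unfolding beta_measure_def by (subst emeasure_density) auto

lemma emeasure_beta_measure_atMost:
  assumes y: "0 \<le> y" "y \<le> 1"
  shows "emeasure (beta_measure (real s + 1) (real m + 1)) {..y} = ennreal (binomial_tail s m y)"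
proof -
  define g where "g x = real (s+1+m) * real ((s+m) choose s) * x^s * (1-x)^m" for x
  have "(g has_integral (binomial_tail s m y - binomial_tail s m 0)) {0..y}"
    using y has_real_derivative_binomial_tail[of s m]
    by (intro fundamental_theorem_of_calculus)
       (auto simp: g_def has_real_derivative_iff_has_vector_derivative[symmetric]
         intro: has_field_derivative_at_within)
  moreover have "binomial_tail s m 0 = 0"
    unfolding binomial_tail_def by (intro sum.neutral) auto
  ultimately have int: "(g has_integral binomial_tail s m y) {0..y}"
    by simp
  have "AE x in lborel. x \<noteq> 0" "AE x in lborel. x \<noteq> 1"
    by (rule AE_lborel_singleton)+
  then have "AE x in lborel. ennreal (beta_density (real s + 1) (real m + 1) x) * indicator {..y} x
               = ennreal (indicator {0..y} x * g x)"
  proof eventually_elim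
    case (elim x)
    then show ?case
      using y by (cases "0 < x \<and> x < 1")
        (auto simp: beta_density_of_nat g_def indicator_def, auto simp: beta_density_def)
  qed
  then have "emeasure (beta_measure (real s + 1) (real m + 1)) {..y}
      = (\<integral>\<^sup>+x. ennreal (indicator {0..y} x * g x) \<partial>lborel)"
    by (simp add: emeasure_beta_measure cong: nn_integral_cong_AE)
  also have "\<dots> = ennreal (binomial_tail s m y)"
    by (rule nn_integral_has_integral_lebesgue[OF _ int]) (use y in \<open>auto simp: g_def\<close>)
  finally show ?thesis .
qed

lemma prob_space_beta_measure: "prob_space (beta_measure (real s + 1) (real m + 1))"
proof
  have "emeasure (beta_measure (real s + 1) (real m + 1)) UNIV
      = emeasure (beta_measure (real s + 1) (real m + 1)) {..1}"
    by (simp add: emeasure_beta_measure del: space_beta_measure)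
       (intro nn_integral_cong, auto simp: beta_density_def indicator_def)
  also have "\<dots> = 1"
    using emeasure_beta_measure_atMost[of 1 s m] binomial_tail_1 by simp
  finally show "emeasure (beta_measure (real s + 1) (real m + 1))
                  (space (beta_measure (real s + 1) (real m + 1))) = 1"
    by simp
qed

lemma measure_beta_measure_atMost:
  assumes "0 \<le> y" "y \<le> 1"
  shows "measure (beta_measure (real s + 1) (real m + 1)) {..y}
           = measure_pmf.prob (binomial_pmf (s+1+m) y) {k. s < k}"
  using emeasure_beta_measure_atMost[OF assms, of s m] binomial_tail_eq_prob[OF assms, of s m]
  by (simp add: measure_def)

lemma beta_measure_atMost_le:
  assumes y: "0 \<le> y" "y \<le> 1" and e: "0 \<le> e" and le: "real (s+1+m) * y + e \<le> real s + 1"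
  shows "measure (beta_measure (real s + 1) (real m + 1)) {..y} \<le> exp (-2 * e\<^sup>2 / real (s+1+m))"
proof -
  interpret binomial_distribution "s+1+m" y
    by standard (use y in auto)
  have "measure (beta_measure (real s + 1) (real m + 1)) {..y}
          = measure_pmf.prob (binomial_pmf (s+1+m) y) {k. s < k}"
    by (rule measure_beta_measure_atMost[OF y])
  also have "\<dots> \<le> measure_pmf.prob (binomial_pmf (s+1+m) y) {k. real k \<ge> real (s+1+m) * y + e}"
    using le by (intro measure_pmf.finite_measure_mono) auto
  also have "\<dots> \<le> exp (-2 * e\<^sup>2 / real (s+1+m))"
    by (rule prob_ge) (use e in auto)
  finally show ?thesis .
qed

lemma beta_measure_greaterThan_le:
  assumes y: "0 \<le> y" "y \<le> 1" and e: "0 \<le> e" and le: "real s \<le> real (s+1+m) * y - e"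
  shows "measure (beta_measure (real s + 1) (real m + 1)) {y<..} \<le> exp (-2 * e\<^sup>2 / real (s+1+m))"
proof -
  interpret binomial_distribution "s+1+m" y
    by standard (use y in auto)
  interpret beta: prob_space "beta_measure (real s + 1) (real m + 1)"
    by (rule prob_space_beta_measure)
  have "{y<..} = UNIV - {..y}"
    by auto
  then have "measure (beta_measure (real s + 1) (real m + 1)) {y<..}
          = 1 - measure_pmf.prob (binomial_pmf (s+1+m) y) {k. s < k}"
    using beta.prob_compl[of "{..y}"] measure_beta_measure_atMost[OF y, of s m] by simp
  also have "\<dots> = measure_pmf.prob (binomial_pmf (s+1+m) y) {..s}"
    using measure_pmf.prob_compl[of "{k. s < k}" "binomial_pmf (s+1+m) y"]
    by (simp add: Diff_eq atMost_def not_less flip: Collect_neg_eq)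
  also have "\<dots> \<le> measure_pmf.prob (binomial_pmf (s+1+m) y) {k. real k \<le> real (s+1+m) * y - e}"
    using le by (intro measure_pmf.finite_measure_mono) auto
  also have "\<dots> \<le> exp (-2 * e\<^sup>2 / real (s+1+m))"
    by (rule prob_le) (use e in auto)
  finally show ?thesis .
qed

lemma measure_bind_pmf_le:
  assumes K: "\<And>s. prob_space (K s)" "\<And>s. sets (K s) = sets N"
    and A: "A \<in> sets N" and B: "0 \<le> B"
    and le: "\<And>s. s \<in> set_pmf p \<Longrightarrow> \<not> P s \<Longrightarrow> measure (K s) A \<le> B"
  shows "measure (measure_pmf p \<bind> K) A \<le> measure_pmf.prob p {s. P s} + B"
proof -
  have p: "measure_pmf p \<in> space (prob_algebra (count_space UNIV))"
    by (simp add: space_prob_algebra prob_space_measure_pmf)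
  have kernel: "K \<in> count_space UNIV \<rightarrow>\<^sub>M prob_algebra N"
    using K by (auto simp: measurable_count_space_eq1 space_prob_algebra)
  have "emeasure (measure_pmf p \<bind> K) A = (\<integral>\<^sup>+s. emeasure (K s) A \<partial>measure_pmf p)"
    by (rule emeasure_bind_prob_algebra[OF p kernel A])
  also have "\<dots> \<le> (\<integral>\<^sup>+s. indicator {s. P s} s + ennreal B \<partial>measure_pmf p)"
  proof (intro nn_integral_mono_AE AE_pmfI)
    fix s assume "s \<in> set_pmf p"
    interpret Ks: prob_space "K s" by (rule K)
    show "emeasure (K s) A \<le> indicator {s. P s} s + ennreal B"
    proof (cases "P s")
      case True
      then show ?thesis
        using Ks.emeasure_le_1 by (auto intro: order.trans[OF _ add_increasing2])
    next
      case False
      then show ?thesis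
        using le[OF \<open>s \<in> set_pmf p\<close>] by (simp add: Ks.emeasure_eq_measure ennreal_leI)
    qed
  qed
  also have "\<dots> = ennreal (measure_pmf.prob p {s. P s} + B)"
    using B by (simp add: nn_integral_add measure_pmf.emeasure_eq_measure ennreal_plus)
  finally have "emeasure (measure_pmf p \<bind> K) A \<le> ennreal (measure_pmf.prob p {s. P s} + B)" .
  then show ?thesis
    unfolding measure_def using B by (intro enn2real_leI) auto
qed

lemma beta_kernel_measurable:
  "(\<lambda>s. beta_measure (real s + 1) (real (n - s) + 1)) \<in> count_space UNIV \<rightarrow>\<^sub>M prob_algebra borel"
  by (auto simp: measurable_count_space_eq1 space_prob_algebra prob_space_beta_measure)

lemma Hoeffding_exponent_le:
  "real n * \<Delta>\<^sup>2 / 8 \<le> 2 * ((real n + 2) * \<Delta> / 4)\<^sup>2 / real (n + 1)"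
proof -
  have "real n * (real n + 1) * \<Delta>\<^sup>2 \<le> (real n + 2)^2 * \<Delta>\<^sup>2"
    by (intro mult_right_mono) (simp_all add: power2_eq_square algebra_simps)
  then show ?thesis
    by (simp add: field_simps power2_eq_square)
qed

text \<open>A count \<open>s\<close> that is not atypically small exceeds \<open>(n+1) c\<close> by a margin of
  \<open>(n+2) \<Delta>/4\<close>, and the Hoeffding exponent of \<open>Bin(n+1, c)\<close> for that margin dominates
  \<open>n \<Delta>\<^sup>2/8\<close>.\<close>
lemma beta_mixture_atMost_le:
  assumes p: "0 \<le> p" "p \<le> 1" and n: "0 < n" and \<Delta>: "0 < \<Delta>"
    and c: "0 \<le> c" "c \<le> p - \<Delta>/2"
  shows "measure (measure_pmf (binomial_pmf n p) \<bind> (\<lambda>s. beta_measure (real s + 1) (real (n - s) + 1)))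
           {..c} \<le> 2 * exp (- (real n * \<Delta>\<^sup>2 / 8))"
proof -
  interpret binomial_distribution n p
    by standard (use p in auto)
  have "measure (measure_pmf (binomial_pmf n p) \<bind> (\<lambda>s. beta_measure (real s + 1) (real (n - s) + 1))) {..c}
          \<le> measure_pmf.prob (binomial_pmf n p) {s. real s \<le> n * p - n * \<Delta> / 4}
             + exp (- (real n * \<Delta>\<^sup>2 / 8))"
  proof (rule measure_bind_pmf_le)
    fix s assume "s \<in> set_pmf (binomial_pmf n p)" and large: "\<not> real s \<le> n * p - n * \<Delta> / 4"
    then have n_eq: "s + 1 + (n - s) = n + 1"
      using p by (auto simp: set_pmf_binomial_eq split: if_splits)
    have "(n + 1) * c + (n + 2) * \<Delta> / 4 \<le> (n + 1) * (p - \<Delta>/2) + (n + 2) * \<Delta> / 4"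
      using c by (intro add_right_mono mult_left_mono) auto
    also have "\<dots> = n * p - n * \<Delta> / 4 + p"
      by (simp add: field_simps)
    finally have "real (s + 1 + (n - s)) * c + (n + 2) * \<Delta> / 4 \<le> real s + 1"
      using large p unfolding n_eq by simp
    then have "measure (beta_measure (real s + 1) (real (n - s) + 1)) {..c}
        \<le> exp (-2 * ((n + 2) * \<Delta> / 4)\<^sup>2 / real (s + 1 + (n - s)))"
      using c p \<Delta> by (intro beta_measure_atMost_le) auto
    also have "\<dots> \<le> exp (- (real n * \<Delta>\<^sup>2 / 8))"
      unfolding n_eq using Hoeffding_exponent_le[of n \<Delta>] by (simp add: add.commute)
    finally show "measure (beta_measure (real s + 1) (real (n - s) + 1)) {..c} \<le> exp (- (real n * \<Delta>\<^sup>2 / 8))" .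
  qed (auto intro: prob_space_beta_measure)
  also have "measure_pmf.prob (binomial_pmf n p) {s. real s \<le> n * p - n * \<Delta> / 4}
               \<le> exp (-2 * (n * \<Delta> / 4)\<^sup>2 / n)"
    using \<Delta> n by (intro prob_le) auto
  also have "exp (-2 * (n * \<Delta> / 4)\<^sup>2 / n) = exp (- (real n * \<Delta>\<^sup>2 / 8))"
    using n by (simp add: power2_eq_square field_simps)
  finally show ?thesis
    by simp
qed

lemma beta_mixture_greaterThan_le:
  assumes p: "0 \<le> p" "p \<le> 1" and n: "0 < n" and \<Delta>: "0 < \<Delta>"
    and c: "p + \<Delta>/2 \<le> c" "c \<le> 1"
  shows "measure (measure_pmf (binomial_pmf n p) \<bind> (\<lambda>s. beta_measure (real s + 1) (real (n - s) + 1)))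
           {c<..} \<le> 2 * exp (- (real n * \<Delta>\<^sup>2 / 8))"
proof -
  interpret binomial_distribution n p
    by standard (use p in auto)
  have "measure (measure_pmf (binomial_pmf n p) \<bind> (\<lambda>s. beta_measure (real s + 1) (real (n - s) + 1))) {c<..}
          \<le> measure_pmf.prob (binomial_pmf n p) {s. real s \<ge> n * p + n * \<Delta> / 4}
             + exp (- (real n * \<Delta>\<^sup>2 / 8))"
  proof (rule measure_bind_pmf_le)
    fix s assume "s \<in> set_pmf (binomial_pmf n p)" and small: "\<not> real s \<ge> n * p + n * \<Delta> / 4"
    then have n_eq: "s + 1 + (n - s) = n + 1"
      using p by (auto simp: set_pmf_binomial_eq split: if_splits)
    have "n * p + n * \<Delta> / 4 + p = (n + 1) * (p + \<Delta>/2) - (n + 2) * \<Delta> / 4"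
      by (simp add: field_simps)
    also have "\<dots> \<le> (n + 1) * c - (n + 2) * \<Delta> / 4"
      using c by (intro diff_right_mono mult_left_mono) auto
    finally have "real s \<le> real (s + 1 + (n - s)) * c - (n + 2) * \<Delta> / 4"
      using small p unfolding n_eq by simp
    then have "measure (beta_measure (real s + 1) (real (n - s) + 1)) {c<..}
        \<le> exp (-2 * ((n + 2) * \<Delta> / 4)\<^sup>2 / real (s + 1 + (n - s)))"
      using c p \<Delta> by (intro beta_measure_greaterThan_le) auto
    also have "\<dots> \<le> exp (- (real n * \<Delta>\<^sup>2 / 8))"
      unfolding n_eq using Hoeffding_exponent_le[of n \<Delta>] by (simp add: add.commute)
    finally show "measure (beta_measure (real s + 1) (real (n - s) + 1)) {c<..} \<le> exp (- (real n * \<Delta>\<^sup>2 / 8))" .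
  qed (auto intro: prob_space_beta_measure)
  also have "measure_pmf.prob (binomial_pmf n p) {s. real s \<ge> n * p + n * \<Delta> / 4}
               \<le> exp (-2 * (n * \<Delta> / 4)\<^sup>2 / n)"
    using \<Delta> n by (intro prob_ge) auto
  also have "exp (-2 * (n * \<Delta> / 4)\<^sup>2 / n) = exp (- (real n * \<Delta>\<^sup>2 / 8))"
    using n by (simp add: power2_eq_square field_simps)
  finally show ?thesis
    by simp
qed

lemma PiM_measure_pmf_eq_distr_Pi_pmf:
  assumes "finite I" "I \<noteq> {}"
  shows "PiM I (\<lambda>i. measure_pmf (p i))
           = distr (measure_pmf (Pi_pmf I dflt p)) (PiM I (\<lambda>_. count_space UNIV)) (\<lambda>f. restrict f I)"
proof -
  have "distr (measure_pmf (Pi_pmf I dflt p)) (PiM I (\<lambda>_. count_space UNIV)) (\<lambda>f. restrict f I)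
          = PiM I (\<lambda>i. distr (measure_pmf (Pi_pmf I dflt p)) (count_space UNIV) (\<lambda>f. f i))"
    using indep_vars_Pi_pmf[OF assms(1), of dflt p] assms(2)
    by (subst (asm) prob_space.indep_vars_iff_distr_eq_PiM'[OF measure_pmf.prob_space_axioms]) auto
  also have "\<dots> = PiM I (\<lambda>i. measure_pmf (p i))"
    using assms(1) by (intro PiM_cong refl) (simp add: Pi_pmf_component flip: map_pmf_rep_eq)
  finally show ?thesis ..
qed

context
begin

interpretation pmf_as_function .

lemma pmf_bernoulli_pmf:
  "pmf (bernoulli_pmf p) b = (if b then max 0 (min 1 p) else 1 - max 0 (min 1 p))"
  by transfer auto

end

lemma bernoulli_pmf_measurable:
  assumes "sets D = sets borel"
  shows "(\<lambda>r. measure_pmf (bernoulli_pmf r)) \<in> D \<rightarrow>\<^sub>M prob_algebra (count_space UNIV)"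
proof (rule measurable_prob_algebraI)
  show "prob_space (measure_pmf (bernoulli_pmf r))" for r
    by (rule prob_space_measure_pmf)
  show "(\<lambda>r. measure_pmf (bernoulli_pmf r)) \<in> D \<rightarrow>\<^sub>M subprob_algebra (count_space UNIV)"
  proof (rule measurable_subprob_algebra)
    fix A :: "bool set"
    have "(\<lambda>r. emeasure (measure_pmf (bernoulli_pmf r)) A) = (\<lambda>r. ennreal (\<Sum>b\<in>A. pmf (bernoulli_pmf r) b))"
      by (intro ext emeasure_measure_pmf_finite) auto
    also have "\<dots> \<in> borel_measurable D"
      unfolding pmf_bernoulli_pmf measurable_cong_sets[OF assms refl] by measurable
    finally show "(\<lambda>r. emeasure (measure_pmf (bernoulli_pmf r)) A) \<in> borel_measurable D" .
  qed (auto simp: prob_space_imp_subprob_space prob_space_measure_pmf)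
qed

locale unit_reward = prob_space D for D :: "real measure" +
  assumes sets_eq_borel: "sets D = sets borel"
    and AE_unit: "AE x in D. 0 \<le> x \<and> x \<le> 1"
begin

lemma integrable_id: "integrable D (\<lambda>x. x)"
proof (rule integrable_const_bound[where B=1])
  show "AE x in D. norm x \<le> 1"
    using AE_unit by eventually_elim auto
  show "(\<lambda>x. x) \<in> borel_measurable D"
    unfolding measurable_cong_sets[OF sets_eq_borel refl] by simp
qed

lemma mean_nonneg: "0 \<le> (\<integral>x. x \<partial>D)"
  using AE_unit by (intro integral_nonneg_AE) (auto elim: eventually_mono)

lemma mean_le_1: "(\<integral>x. x \<partial>D) \<le> 1"
proof -
  have "(\<integral>x. x \<partial>D) \<le> (\<integral>x. 1 \<partial>D)"
    using AE_unit by (intro integral_mono_AE[OF integrable_id]) (auto elim: eventually_mono)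
  then show ?thesis
    by (simp add: prob_space)
qed

lemma trial_eq_bernoulli: "trial D = measure_pmf (bernoulli_pmf (\<integral>x. x \<partial>D))"
proof (rule measure_eqI_countable[of _ UNIV])
  have D: "D \<in> space (prob_algebra D)"
    by (simp add: space_prob_algebra prob_space_axioms)
  note kernel = bernoulli_pmf_measurable[OF sets_eq_borel]
  show "sets (trial D) = Pow UNIV"
    unfolding trial_def sets_bind'[OF D kernel] by simp
  fix b :: bool
  have "emeasure (trial D) {b} = (\<integral>\<^sup>+r. emeasure (measure_pmf (bernoulli_pmf r)) {b} \<partial>D)"
    unfolding trial_def by (rule emeasure_bind_prob_algebra[OF D kernel]) simp
  also have "\<dots> = (\<integral>\<^sup>+r. ennreal (if b then r else 1 - r) \<partial>D)"
    by (intro nn_integral_cong_AE eventually_mono[OF AE_unit]) (auto simp: emeasure_pmf_single)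
  also have "\<dots> = ennreal (\<integral>r. (if b then r else 1 - r) \<partial>D)"
    using integrable_id
    by (intro nn_integral_eq_integral eventually_mono[OF AE_unit]) (cases b, auto)
  also have "\<dots> = emeasure (measure_pmf (bernoulli_pmf (\<integral>x. x \<partial>D))) {b}"
    using integrable_id mean_nonneg mean_le_1 by (cases b) (simp_all add: emeasure_pmf_single prob_space)
  finally show "emeasure (trial D) {b} = emeasure (measure_pmf (bernoulli_pmf (\<integral>x. x \<partial>D))) {b}" .
qed simp_all

lemma success_count_eq_binomial:
  "success_count D n = measure_pmf (binomial_pmf n (\<integral>x. x \<partial>D))"
proof (cases "n = 0")
  case True
  show ?thesis
  proof (rule measure_eqI_countable[of _ UNIV])
    fix k :: nat
    show "emeasure (success_count D n) {k} = emeasure (binomial_pmf n (\<integral>x. x \<partial>D)) {k}"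
      using True mean_nonneg mean_le_1
      by (simp add: success_count_def emeasure_distr PiM_empty binomial_pmf_0 vimage_def)
  qed (simp_all add: success_count_def)
next
  case False
  let ?coins = "Pi_pmf {..<n} False (\<lambda>_. bernoulli_pmf (\<integral>x. x \<partial>D))"
  let ?X = "PiM {..<n} (\<lambda>_. count_space (UNIV :: bool set))"
  have X: "?X = count_space (PiE {..<n} (\<lambda>_. UNIV))"
    by (rule count_space_PiM_finite) auto
  have "success_count D n = distr (distr (measure_pmf ?coins) ?X (\<lambda>f. restrict f {..<n})) (count_space UNIV)
                              (\<lambda>\<omega>. card {t \<in> {..<n}. \<omega> t})"
    unfolding success_count_def trial_eq_bernoulli
    using False by (subst PiM_measure_pmf_eq_distr_Pi_pmf) auto
  also have "\<dots> = distr (measure_pmf ?coins) (count_space UNIV) (\<lambda>f. card {t \<in> {..<n}. f t})"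
    by (subst distr_distr) (auto simp: X comp_def intro!: distr_cong arg_cong[where f=card])
  also have "\<dots> = measure_pmf (binomial_pmf n (\<integral>x. x \<partial>D))"
    using mean_nonneg mean_le_1
    by (simp add: binomial_pmf_altdef'[of "{..<n}" n _ False] map_pmf_rep_eq)
  finally show ?thesis .
qed

lemma ts_sample_eq:
  "ts_sample D n = measure_pmf (binomial_pmf n (\<integral>x. x \<partial>D))
                     \<bind> (\<lambda>s. beta_measure (real s + 1) (real (n - s) + 1))"
  unfolding ts_sample_def success_count_eq_binomial ..

lemma ts_sample_atMost_le:
  assumes "0 < n" "0 < \<Delta>" "0 \<le> c" "c \<le> (\<integral>x. x \<partial>D) - \<Delta>/2"
  shows "measure (ts_sample D n) {..c} \<le> 2 * exp (- (real n * \<Delta>\<^sup>2 / 8))"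
  unfolding ts_sample_eq using assms mean_nonneg mean_le_1 by (intro beta_mixture_atMost_le)

lemma ts_sample_greaterThan_le:
  assumes "0 < n" "0 < \<Delta>" "(\<integral>x. x \<partial>D) + \<Delta>/2 \<le> c" "c \<le> 1"
  shows "measure (ts_sample D n) {c<..} \<le> 2 * exp (- (real n * \<Delta>\<^sup>2 / 8))"
  unfolding ts_sample_eq using assms mean_nonneg mean_le_1 by (intro beta_mixture_greaterThan_le)

lemma prob_space_ts_sample: "prob_space (ts_sample D n)"
  unfolding ts_sample_eq
  by (rule prob_space_bind'[OF _ beta_kernel_measurable])
     (simp add: space_prob_algebra prob_space_measure_pmf)

lemma sets_ts_sample [measurable_cong]: "sets (ts_sample D n) = sets borel"
  unfolding ts_sample_eq
  by (rule sets_bind'[OF _ beta_kernel_measurable])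
     (simp add: space_prob_algebra prob_space_measure_pmf)

end

lemma measure_PiM_component:
  assumes "\<And>i. i \<in> I \<Longrightarrow> prob_space (M i)" "i \<in> I" "A \<in> sets (M i)"
  shows "measure (PiM I M) {\<theta> \<in> space (PiM I M). \<theta> i \<in> A} = measure (M i) A"
proof -
  have "measure (M i) A = measure (distr (PiM I M) (M i) (\<lambda>\<theta>. \<theta> i)) A"
    using assms(1,2) by (simp add: distr_PiM_component)
  also have "\<dots> = measure (PiM I M) {\<theta> \<in> space (PiM I M). \<theta> i \<in> A}"
    using assms(2,3) by (subst measure_distr) (auto simp: vimage_def Int_def conj_commute)
  finally show ?thesis ..
qed

lemma measure_PiM_lt_le:
  fixes M :: "'i \<Rightarrow> 'a::linorder_topology measure"
  assumes M: "\<And>i. i \<in> I \<Longrightarrow> prob_space (M i)" "\<And>i. i \<in> I \<Longrightarrow> sets (M i) = sets borel"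
    and i: "i \<in> I" and j: "j \<in> I"
  shows "measure (PiM I M) {\<theta> \<in> space (PiM I M). \<theta> i < \<theta> j} \<le> measure (M i) {..c} + measure (M j) {c<..}"
proof -
  interpret prob_space "PiM I M"
    using M by (intro prob_space_PiM)
  have event: "{\<theta> \<in> space (PiM I M). \<theta> k \<in> A} \<in> events" if "k \<in> I" "A \<in> sets borel" for k A
    using measurable_sets[OF measurable_component_singleton[OF that(1)], of A M] that M(2)
    by (simp add: vimage_def Int_def conj_commute)
  have "{\<theta> \<in> space (PiM I M). \<theta> i < \<theta> j}
          \<subseteq> {\<theta> \<in> space (PiM I M). \<theta> i \<in> {..c}} \<union> {\<theta> \<in> space (PiM I M). \<theta> j \<in> {c<..}}"
    by auto
  then have "prob {\<theta> \<in> space (PiM I M). \<theta> i < \<theta> j}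
      \<le> prob {\<theta> \<in> space (PiM I M). \<theta> i \<in> {..c}} + prob {\<theta> \<in> space (PiM I M). \<theta> j \<in> {c<..}}"
    using event[OF i atMost_borel] event[OF j greaterThan_borel]
    by (intro order.trans[OF finite_measure_mono measure_Un_le] sets.Un)
  also have "\<dots> = measure (M i) {..c} + measure (M j) {c<..}"
    using measure_PiM_component[of I M i "{..c}"] measure_PiM_component[of I M j "{c<..}"] M i j
    by simp
  finally show ?thesis .
qed

lemma exploration_count_bounds:
  assumes "0 < \<Delta>" "1 \<le> l" and g: "g = nat \<lceil>8 / \<Delta>\<^sup>2\<rceil>"
  shows "0 < g * l" "real l \<le> real (g * l) * \<Delta>\<^sup>2 / 8"
proof -
  have "8 / \<Delta>\<^sup>2 \<le> real g"
    using assms le_of_int_ceiling[of "8 / \<Delta>\<^sup>2"] by simp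
  then have "8 \<le> real g * \<Delta>\<^sup>2"
    using assms(1) by (simp add: field_simps)
  then show "0 < g * l" "real l \<le> real (g * l) * \<Delta>\<^sup>2 / 8"
    using assms(2) mult_left_mono[of 8 "real g * \<Delta>\<^sup>2" "real l"] by (auto intro!: gr0I)
qed

theorem lemma3:
  fixes N :: nat and D :: "nat \<Rightarrow> real measure" and \<mu> :: "nat \<Rightarrow> real"
    and \<Delta> :: real and \<gamma> l j :: nat
  assumes arms: "\<And>i. i \<in> {1..N} \<Longrightarrow> prob_space (D i)"
    and borel: "\<And>i. i \<in> {1..N} \<Longrightarrow> sets (D i) = sets borel"
    and support: "\<And>i. i \<in> {1..N} \<Longrightarrow> AE x in D i. 0 \<le> x \<and> x \<le> 1"
    and mean: "\<And>i. i \<in> {1..N} \<Longrightarrow> \<mu> i = (\<integral>x. x \<partial>D i)"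
    and N2: "N \<ge> 2"
    and Delta: "\<Delta> = \<mu> 1 - Max (\<mu> ` {2..N})"
    and Delta_pos: "\<Delta> > 0"
    and gamma: "\<gamma> = nat \<lceil>8 / \<Delta>\<^sup>2\<rceil>"
    and l: "l \<ge> 1"
    and j: "j \<in> {2..N}"
  shows "measure (e3ts_thetas N D \<gamma> l)
           {\<theta> \<in> space (e3ts_thetas N D \<gamma> l). \<theta> 1 < \<theta> j} \<le> 4 * exp (- real l)"
proof -
  have arm: "unit_reward (D i)" if "i \<in> {1..N}" for i
    using arms[OF that] borel[OF that] support[OF that] by (simp add: unit_reward_def unit_reward_axioms_def)
  have one: "1 \<in> {1..N}" and j': "j \<in> {1..N}"
    using N2 j by auto
  have "\<mu> j \<le> Max (\<mu> ` {2..N})"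
    using j by (intro Max_ge) auto
  then have gap: "\<mu> j + \<Delta> \<le> \<mu> 1"
    using Delta by simp
  define n where "n = \<gamma> * l"
  define c where "c = \<mu> 1 - \<Delta> / 2"
  have n: "0 < n" and l_le: "real l \<le> real n * \<Delta>\<^sup>2 / 8"
    using exploration_count_bounds[OF Delta_pos l gamma] by (simp_all add: n_def)
  have "measure (e3ts_thetas N D \<gamma> l) {\<theta> \<in> space (e3ts_thetas N D \<gamma> l). \<theta> 1 < \<theta> j}
      \<le> measure (ts_sample (D 1) n) {..c} + measure (ts_sample (D j) n) {c<..}"
    unfolding e3ts_thetas_def n_def[symmetric]
    using one j' unit_reward.prob_space_ts_sample[OF arm] unit_reward.sets_ts_sample[OF arm]
    by (intro measure_PiM_lt_le)
  also have "\<dots> \<le> 2 * exp (- (real n * \<Delta>\<^sup>2 / 8)) + 2 * exp (- (real n * \<Delta>\<^sup>2 / 8))"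
    using unit_reward.mean_nonneg[OF arm[OF j']] unit_reward.mean_le_1[OF arm[OF one]]
      mean[OF one] mean[OF j'] gap n Delta_pos
    by (intro add_mono unit_reward.ts_sample_atMost_le[OF arm[OF one]]
        unit_reward.ts_sample_greaterThan_le[OF arm[OF j']]) (auto simp: c_def)
  also have "\<dots> \<le> 4 * exp (- real l)"
    using l_le by simp
  finally show ?thesis .
qed

end
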